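(* Let $T\subset\mathbb{R}^2$ be a closed triangle with vertices $A=(x_a,y_a)$, $B=(x_b,y_b)$, $O=(x_o,y_o)$ with $y_a=y_b>y_o$, and let $C$ be a point of the open segment $(A,B)$. Put $T'=T\setminus\{A,B\}$ and $T''=T\setminus(\{A\}\cup[B,C])$, where $[B,C]$ is the closed segment from $B$ to $C$. Then there exists a homeomorphism $f:T'\to T''$ preserving the second coordinate (i.e. $f(x,y)=(f_1(x,y),y)$). In particular $f$ is the identity on the sides $(A,O]$ and $[O,B)$, and $f$ maps the open segment $(A,B)$ onto the open segment $(A,C)$. *)

theory Defs
  imports "HOL-Analysis.Analysis"
begin

end

theory Submission
  imports Defs
begin

(*
  In the affine coordinates p = O + t (B - O) + u (A - B) the triangle is {0 \<le> u \<le> t \<le> 1},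
  the horizontal lines are the lines t = const, and A, B, O, C become (1,1), (1,0), (0,0), (1,s).
  On each slice {t} \<times> [0,t] take the piecewise linear map fixing both ends and sending the knot
  s t (1 - t) to s t. As t \<rightarrow> 1 the knot tends to 0 while its image tends to s, so the top
  slice (0,1) is stretched onto (s,1): the map is continuous everywhere except at B, its inverse
  is continuous everywhere, and conjugating by the coordinate chart gives f.
*)

lemma homeomorphism_conjugate:
  assumes "homeomorphism S T f g" and "homeomorphism UNIV UNIV h k"
  shows "homeomorphism (h ` S) (h ` T) (h \<circ> f \<circ> k) (h \<circ> g \<circ> k)"
proof -
  have "k ` h ` S = S"
    using homeomorphism_apply1[OF assms(2)] by (simp add: image_image)
  then have "homeomorphism (h ` S) S k h"
    using homeomorphism_of_subsets[OF homeomorphism_sym[THEN iffD1, OF assms(2)], of "h ` S" UNIV]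
    by blast
  moreover have "homeomorphism T (h ` T) h k"
    using homeomorphism_of_subsets[OF assms(2), of T UNIV] by blast
  ultimately show ?thesis
    using homeomorphism_compose[OF homeomorphism_compose[OF _ assms(1)]] by (simp add: comp_assoc)
qed

lemma affine_homeomorphism:
  fixes L :: "'a::euclidean_space \<Rightarrow> 'a"
  assumes "linear L" "inj L"
  obtains k where "homeomorphism UNIV UNIV (\<lambda>x. c + L x) k"
proof -
  obtain L' where L': "linear L'" "\<And>x. L' (L x) = x" "\<And>x. L (L' x) = x"
    using eucl.linear_injective_isomorphism[OF assms] by blast
  have "bounded_linear L" "bounded_linear L'"
    using assms(1) L'(1) by (simp_all add: linear_conv_bounded_linear)
  then have "homeomorphism UNIV UNIV (\<lambda>x. c + L x) (\<lambda>y. L' (y - c))"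
    by (intro homeomorphismI continuous_on_add continuous_on_const continuous_on_diff continuous_on_id
        bounded_linear.continuous_on[of L] bounded_linear.continuous_on[of L'])
       (auto simp: L' intro: image_eqI[where x = "L' (_ - c)"])
  then show thesis ..
qed

lemma convex_hull_affine_image:
  "linear L \<Longrightarrow> (\<lambda>x. c + L x) ` (convex hull S) = convex hull ((\<lambda>x. c + L x) ` S)"
proof -
  assume "linear L"
  have "(\<lambda>x. c + L x) ` X = (\<lambda>x. c + x) ` L ` X" for X by (simp add: image_image)
  then show ?thesis by (simp add: convex_hull_translation convex_hull_linear_image \<open>linear L\<close>)
qed

lemma closed_segment_affine_image:
  "linear L \<Longrightarrow> (\<lambda>x. c + L x) ` closed_segment a b = closed_segment (c + L a) (c + L b)"
  using closed_segment_linear_image[of L a b] closed_segment_translation[of c "L a" "L b"]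
  by (simp add: image_image)

lemma open_segment_affine_image:
  "linear L \<Longrightarrow> inj L \<Longrightarrow> (\<lambda>x. c + L x) ` open_segment a b = open_segment (c + L a) (c + L b)"
  using open_segment_linear_image[of L a b] open_segment_translation[of c "L a" "L b"]
  by (simp add: image_image)

lemma closed_segment_vertical:
  fixes a :: "'a::real_vector" and u v :: "'b::real_vector"
  shows "closed_segment (a, u) (a, v) = {a} \<times> closed_segment u v"
  by (auto simp: in_segment algebra_simps)

lemma open_segment_vertical:
  fixes a :: "'a::real_vector" and u v :: "'b::real_vector"
  shows "open_segment (a, u) (a, v) = {a} \<times> open_segment u v"
  by (auto simp: open_segment_def closed_segment_vertical)

(* Both branches are linear interpolations, on [0, s t (1 - t)] and on [s t (1 - t), t], with the
   factors vanishing at t = 0 cancelled from their slopes so that the formulas stay continuous there. *)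
definition slice_map :: "real \<Rightarrow> real \<Rightarrow> real \<Rightarrow> real" where
  "slice_map s t u =
     (if u \<le> s*t*(1-t) then u/(1-t) else s*t + (u - s*t*(1-t))*(1-s)/(1 - s*(1-t)))"

definition slice_map_inv :: "real \<Rightarrow> real \<Rightarrow> real \<Rightarrow> real" where
  "slice_map_inv s t v =
     (if v \<le> s*t then v * (1 - t) else s*t*(1-t) + (v - s*t)*(1 - s*(1-t))/(1-s))"

lemma slice_denominator_pos: "0 < (s::real) \<Longrightarrow> s < 1 \<Longrightarrow> 0 \<le> t \<Longrightarrow> 0 < 1 - s*(1-t)"
proof -
  assume "0 < s" "s < 1" "0 \<le> t"
  then have "s * (1 - t) \<le> s" by (simp add: mult_left_le)
  with \<open>s < 1\<close> show ?thesis by linarith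
qed

lemma slice_map_top: "0 < u \<Longrightarrow> slice_map s 1 u = s + u*(1-s)"
  by (simp add: slice_map_def)

lemma slice_map_inv_top: "s < v \<Longrightarrow> s \<noteq> 1 \<Longrightarrow> slice_map_inv s 1 v = (v - s)/(1-s)"
  by (simp add: slice_map_inv_def)

lemma slice_map_zero: "0 \<le> s \<Longrightarrow> 0 \<le> t \<Longrightarrow> t \<le> 1 \<Longrightarrow> slice_map s t 0 = 0"
  by (simp add: slice_map_def)

lemma slice_map_diagonal:
  assumes s: "0 < s" "s < 1" and t: "0 \<le> t" "t < 1"
  shows "slice_map s t t = t"
proof (cases "t = 0")
  case True
  then show ?thesis by (simp add: slice_map_def)
next
  case False
  let ?D = "1 - s*(1-t)"
  have D: "0 < ?D" using slice_denominator_pos s t by simp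
  have "s*(1-t)*t < 1*t" using D False t by (intro mult_strict_right_mono) auto
  then have "slice_map s t t = s*t + (t*?D)*(1-s)/?D"
    by (simp add: slice_map_def algebra_simps)
  also have "(t*?D)*(1-s)/?D = t*(1-s)" using D by simp
  also have "s*t + t*(1-s) = t" by (simp add: algebra_simps)
  finally show ?thesis .
qed

lemma slice_map_range:
  assumes s: "0 < s" "s < 1" and u: "0 \<le> u" "u \<le> t" "t \<le> 1" and top: "t = 1 \<Longrightarrow> 0 < u"
  shows "0 \<le> slice_map s t u \<and> slice_map s t u \<le> t"
proof (cases "u \<le> s*t*(1-t)")
  case True
  then have "t < 1" using u top by (cases "t = 1") auto
  moreover have "s*t \<le> t" using s u by (simp add: mult_left_le_one_le)
  moreover have "u/(1-t) \<le> s*t" using True \<open>t < 1\<close> by (simp add: divide_le_eq)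
  ultimately show ?thesis using True u by (simp add: slice_map_def)
next
  case False
  let ?D = "1 - s*(1-t)"
  have D: "0 < ?D" using slice_denominator_pos s u by simp
  have "(u - s*t*(1-t))*(1-s) \<le> (t*?D)*(1-s)"
    using s u by (intro mult_right_mono) (auto simp: algebra_simps)
  then have "(u - s*t*(1-t))*(1-s)/?D \<le> t*(1-s)" using D by (simp add: pos_divide_le_eq ac_simps)
  moreover have "0 \<le> (u - s*t*(1-t))*(1-s)/?D" using False s D by simp
  moreover have "0 \<le> s*t" using s u by simp
  ultimately show ?thesis using False by (simp add: slice_map_def algebra_simps)
qed

lemma slice_map_inv_range:
  assumes s: "0 < s" "s < 1" and v: "0 \<le> v" "v \<le> t" "t \<le> 1" and top: "t = 1 \<Longrightarrow> s < v"
  shows "0 \<le> slice_map_inv s t v \<and> slice_map_inv s t v \<le> t"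
proof (cases "v \<le> s*t")
  case True
  then have "t < 1" using v top by (cases "t = 1") auto
  moreover have "0 \<le> v * t" using v by simp
  ultimately have "v * (1 - t) \<le> v" by (simp add: algebra_simps)
  then show ?thesis using True v \<open>t < 1\<close> by (simp add: slice_map_inv_def)
next
  case False
  let ?D = "1 - s*(1-t)"
  have D: "0 < ?D" using slice_denominator_pos s v by simp
  have "(v - s*t)*?D \<le> (t*(1-s))*?D"
    using s v D by (intro mult_right_mono) (auto simp: algebra_simps)
  then have "(v - s*t)*?D/(1-s) \<le> t*?D" using s by (simp add: pos_divide_le_eq ac_simps)
  moreover have "0 \<le> (v - s*t)*?D/(1-s)" using False s D by simp
  moreover have "0 \<le> s*t*(1-t)" using s v by simp
  ultimately show ?thesis using False by (simp add: slice_map_inv_def algebra_simps)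
qed

lemma slice_map_inv_slice_map:
  assumes s: "0 < s" "s < 1" and u: "0 \<le> t" "t \<le> 1" "t = 1 \<Longrightarrow> 0 < u"
  shows "slice_map_inv s t (slice_map s t u) = u"
proof (cases "u \<le> s*t*(1-t)")
  case True
  then have "t \<noteq> 1" using u by fastforce
  moreover have "u/(1-t) \<le> s*t" using True u \<open>t \<noteq> 1\<close> by (simp add: divide_le_eq)
  ultimately show ?thesis using True by (simp add: slice_map_def slice_map_inv_def)
next
  case False
  have D: "0 < 1 - s*(1-t)" using slice_denominator_pos s u by simp
  have "0 < (u - s*t*(1-t))*(1-s)/(1 - s*(1-t))" using False s D by simp
  then have "\<not> (u - s*t*(1-t))*(1-s)/(1 - s*(1-t)) \<le> 0" by linarith
  then show ?thesis using False s D by (simp add: slice_map_def slice_map_inv_def)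
qed

lemma slice_map_slice_map_inv:
  assumes s: "0 < s" "s < 1" and v: "0 \<le> t" "t \<le> 1" "t = 1 \<Longrightarrow> s < v"
  shows "slice_map s t (slice_map_inv s t v) = v"
proof (cases "v \<le> s*t")
  case True
  then have "t \<noteq> 1" using v by fastforce
  moreover have "v * (1 - t) \<le> s*t*(1-t)" using True v by (simp add: mult_right_mono)
  ultimately show ?thesis using True by (simp add: slice_map_def slice_map_inv_def)
next
  case False
  have D: "0 < 1 - s*(1-t)" using slice_denominator_pos s v by simp
  have "0 < (v - s*t)*(1 - s*(1-t))/(1-s)" using False s D by simp
  then have "\<not> (v - s*t)*(1 - s*(1-t))/(1-s) \<le> 0" by linarith
  then show ?thesis using False s D by (simp add: slice_map_def slice_map_inv_def)
qed

lemma continuous_on_slice_map: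
  assumes s: "0 < s" "s < 1" and S: "\<And>z. z \<in> S \<Longrightarrow> 0 \<le> fst z \<and> (fst z = 1 \<longrightarrow> 0 < snd z)"
  shows "continuous_on S (\<lambda>z. slice_map s (fst z) (snd z))"
proof -
  let ?knot = "\<lambda>z. snd z - s * fst z * (1 - fst z)"
  have "continuous_on S (\<lambda>z. if ?knot z \<le> 0 then snd z / (1 - fst z)
          else s * fst z + ?knot z * (1-s) / (1 - s * (1 - fst z)))"
  proof (rule continuous_on_cases_le)
    have "fst z \<noteq> 1" if "z \<in> S" "?knot z \<le> 0" for z using that S[of z] by auto
    then show "continuous_on {z \<in> S. ?knot z \<le> 0} (\<lambda>z. snd z / (1 - fst z))"
      by (intro continuous_intros) auto
    have "1 - s * (1 - fst z) \<noteq> 0" if "z \<in> S" for z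
      using that S[of z] slice_denominator_pos[OF s] by fastforce
    then show "continuous_on {z \<in> S. 0 \<le> ?knot z}
        (\<lambda>z. s * fst z + ?knot z * (1-s) / (1 - s * (1 - fst z)))"
      by (intro continuous_intros) auto
    show "continuous_on S ?knot" by (intro continuous_intros)
  next
    fix z assume z: "z \<in> S" "?knot z = 0"
    then have "fst z \<noteq> 1" using S[of z] by auto
    then show "snd z / (1 - fst z) = s * fst z + ?knot z * (1-s) / (1 - s * (1 - fst z))"
      using z by (simp add: field_simps)
  qed
  then show ?thesis by (simp add: slice_map_def)
qed

lemma continuous_on_slice_map_inv:
  assumes "s \<noteq> 1"
  shows "continuous_on S (\<lambda>z. slice_map_inv s (fst z) (snd z))"
proof -
  have "continuous_on S (\<lambda>z. if snd z - s * fst z \<le> 0 then snd z * (1 - fst z)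
          else s * fst z * (1 - fst z) + (snd z - s * fst z) * (1 - s * (1 - fst z)) / (1-s))"
    using assms by (intro continuous_on_cases_le continuous_intros) auto
  then show ?thesis by (simp add: slice_map_inv_def)
qed

lemma convex_hull_standard_triangle:
  "convex hull {(1,1), (1,0), (0,0)} = {z :: real \<times> real. 0 \<le> snd z \<and> snd z \<le> fst z \<and> fst z \<le> 1}"
proof (intro set_eqI iffI)
  fix z :: "real \<times> real"
  assume "z \<in> convex hull {(1,1), (1,0), (0,0)}"
  then obtain a b c where "0 \<le> a" "0 \<le> b" "0 \<le> c" "a + b + c = 1" "z = (a + b, a)"
    unfolding convex_hull_3 by auto
  then show "z \<in> {z. 0 \<le> snd z \<and> snd z \<le> fst z \<and> fst z \<le> 1}" by auto
next
  fix z :: "real \<times> real"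
  assume "z \<in> {z. 0 \<le> snd z \<and> snd z \<le> fst z \<and> fst z \<le> 1}"
  then have "0 \<le> snd z" "0 \<le> fst z - snd z" "0 \<le> 1 - fst z" by auto
  moreover have "z = snd z *\<^sub>R (1,1) + (fst z - snd z) *\<^sub>R (1,0) + (1 - fst z) *\<^sub>R (0,0)"
    by (simp add: prod_eq_iff)
  moreover have "snd z + (fst z - snd z) + (1 - fst z) = 1" by simp
  ultimately show "z \<in> convex hull {(1,1), (1,0), (0,0)}"
    unfolding convex_hull_3 by blast
qed

definition triangle_shift :: "real \<Rightarrow> real \<times> real \<Rightarrow> real \<times> real" where
  "triangle_shift s z = (fst z, slice_map s (fst z) (snd z))"

definition triangle_shift_inv :: "real \<Rightarrow> real \<times> real \<Rightarrow> real \<times> real" where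
  "triangle_shift_inv s z = (fst z, slice_map_inv s (fst z) (snd z))"

definition cut_triangle :: "real \<Rightarrow> (real \<times> real) set" where
  "cut_triangle c =
     {z. 0 \<le> snd z \<and> snd z \<le> fst z \<and> fst z \<le> 1 \<and> (fst z = 1 \<longrightarrow> c < snd z \<and> snd z < 1)}"

lemma cut_triangle_eq:
  "0 \<le> c \<Longrightarrow> cut_triangle c
     = convex hull {(1,1), (1,0), (0,0)} - ({(1,1)} \<union> closed_segment (1,0) (1,c))"
  unfolding cut_triangle_def convex_hull_standard_triangle closed_segment_vertical
    closed_segment_eq_real_ivl
  by (auto simp: prod_eq_iff)

lemma open_segment_top_eq:
  "0 \<le> c \<Longrightarrow> c < 1 \<Longrightarrow> open_segment (1,1) (1,c) = {z \<in> cut_triangle c. fst z = 1}"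
  by (auto simp: cut_triangle_def open_segment_vertical open_segment_eq_real_ivl)

lemma triangle_shift_mem:
  assumes s: "0 < s" "s < 1" and z: "z \<in> cut_triangle 0"
  shows "triangle_shift s z \<in> cut_triangle s"
proof -
  obtain t u where tu: "z = (t, u)" "0 \<le> u" "u \<le> t" "t \<le> 1" "t = 1 \<Longrightarrow> 0 < u \<and> u < 1"
    using z by (cases z) (auto simp: cut_triangle_def)
  have "s < s + u*(1-s) \<and> s + u*(1-s) < 1" if "t = 1"
  proof -
    have "0 < u" "u < 1" using tu(5)[OF that] by auto
    then have "0 < u*(1-s)" "u*(1-s) < 1*(1-s)" using s by (auto intro: mult_strict_right_mono)
    then show ?thesis by simp
  qed
  then show ?thesis
    using slice_map_range[OF s tu(2-4)] tu slice_map_top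
    by (auto simp: triangle_shift_def cut_triangle_def)
qed

lemma triangle_shift_inv_mem:
  assumes s: "0 < s" "s < 1" and z: "z \<in> cut_triangle s"
  shows "triangle_shift_inv s z \<in> cut_triangle 0"
proof -
  obtain t v where tv: "z = (t, v)" "0 \<le> v" "v \<le> t" "t \<le> 1" "t = 1 \<Longrightarrow> s < v \<and> v < 1"
    using z by (cases z) (auto simp: cut_triangle_def)
  have "0 < (v - s)/(1-s) \<and> (v - s)/(1-s) < 1" if "t = 1"
    using s tv(5)[OF that] by (simp add: divide_less_eq)
  then show ?thesis
    using slice_map_inv_range[OF s tv(2-4)] tv slice_map_inv_top s
    by (auto simp: triangle_shift_inv_def cut_triangle_def)
qed

lemma homeomorphism_triangle_shift:
  assumes s: "0 < s" "s < 1"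
  shows "homeomorphism (cut_triangle 0) (cut_triangle s) (triangle_shift s) (triangle_shift_inv s)"
proof (rule homeomorphismI)
  show "continuous_on (cut_triangle 0) (triangle_shift s)"
    unfolding triangle_shift_def[abs_def] cut_triangle_def
    by (intro continuous_intros continuous_on_slice_map s) auto
  show "continuous_on (cut_triangle s) (triangle_shift_inv s)"
    unfolding triangle_shift_inv_def[abs_def] using s
    by (intro continuous_intros continuous_on_slice_map_inv) auto
  show "triangle_shift s ` cut_triangle 0 \<subseteq> cut_triangle s"
    using triangle_shift_mem[OF s] by blast
  show "triangle_shift_inv s ` cut_triangle s \<subseteq> cut_triangle 0"
    using triangle_shift_inv_mem[OF s] by blast
  show "triangle_shift_inv s (triangle_shift s z) = z" if "z \<in> cut_triangle 0" for z
    using that slice_map_inv_slice_map[OF s]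
    by (auto simp: triangle_shift_def triangle_shift_inv_def cut_triangle_def)
  show "triangle_shift s (triangle_shift_inv s z) = z" if "z \<in> cut_triangle s" for z
    using that slice_map_slice_map_inv[OF s]
    by (auto simp: triangle_shift_def triangle_shift_inv_def cut_triangle_def)
qed

lemma triangle_shift_top_edge:
  assumes s: "0 < s" "s < 1"
  shows "triangle_shift s ` open_segment (1,1) (1,0) = open_segment (1,1) (1,s)"
proof -
  note homeo = homeomorphism_triangle_shift[OF s]
  have "triangle_shift s ` {z \<in> cut_triangle 0. fst z = 1} = {z \<in> cut_triangle s. fst z = 1}"
  proof
    show "triangle_shift s ` {z \<in> cut_triangle 0. fst z = 1} \<subseteq> {z \<in> cut_triangle s. fst z = 1}"
      using homeomorphism_image1[OF homeo] by (force simp: triangle_shift_def)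
    show "{z \<in> cut_triangle s. fst z = 1} \<subseteq> triangle_shift s ` {z \<in> cut_triangle 0. fst z = 1}"
    proof clarify
      fix z assume z: "z \<in> cut_triangle s" "fst z = 1"
      have "triangle_shift_inv s z \<in> cut_triangle 0"
        using homeomorphism_image2[OF homeo] z by blast
      moreover have "fst (triangle_shift_inv s z) = 1" using z by (simp add: triangle_shift_inv_def)
      moreover have "triangle_shift s (triangle_shift_inv s z) = z"
        using homeomorphism_apply2[OF homeo] z by blast
      ultimately show "z \<in> triangle_shift s ` {z \<in> cut_triangle 0. fst z = 1}" by force
    qed
  qed
  then show ?thesis using s by (simp add: open_segment_top_eq)
qed

lemma triangle_shift_diagonal:
  assumes s: "0 < s" "s < 1" and z: "z \<in> closed_segment (1,1) (0,0) - {(1,1)}"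
  shows "triangle_shift s z = z"
proof -
  obtain a where "0 \<le> a" "a \<le> 1" "z = (1 - a, 1 - a)"
    using z by (auto simp: in_segment)
  moreover have "a \<noteq> 0" using z \<open>z = (1 - a, 1 - a)\<close> by auto
  ultimately show ?thesis using slice_map_diagonal[OF s] by (simp add: triangle_shift_def)
qed

lemma triangle_shift_base:
  assumes s: "0 < s" "s < 1" and z: "z \<in> closed_segment (0,0) (1,0)"
  shows "triangle_shift s z = z"
proof -
  obtain a where "0 \<le> a" "a \<le> 1" "z = (a, 0)"
    using z by (auto simp: in_segment)
  then show ?thesis using slice_map_zero s by (simp add: triangle_shift_def)
qed

lemma plane_triangle_chart:
  fixes A B Ov :: "real \<times> real"
  assumes "snd A = snd B" "snd B \<noteq> snd Ov" "A \<noteq> B"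
  obtains h k where "homeomorphism UNIV UNIV h k" "inj h"
    and "h (1,1) = A" "h (1,0) = B" "h (0,0) = Ov" "\<And>s. h (1,s) = s *\<^sub>R A + (1 - s) *\<^sub>R B"
    and "\<And>z. snd (h z) = snd Ov + fst z * (snd B - snd Ov)"
    and "\<And>S. h ` (convex hull S) = convex hull (h ` S)"
    and "\<And>a b. h ` closed_segment a b = closed_segment (h a) (h b)"
    and "\<And>a b. h ` open_segment a b = open_segment (h a) (h b)"
proof -
  define L where "L z = fst z *\<^sub>R (B - Ov) + snd z *\<^sub>R (A - B)" for z :: "real \<times> real"
  have "linear L" unfolding L_def by (intro linearI) (simp_all add: algebra_simps)
  have "z = 0" if "L z = 0" for z
  proof -
    have "fst z * (snd B - snd Ov) = 0"
      using arg_cong[OF that, of snd] assms(1) by (simp add: L_def)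
    then have "fst z = 0" using assms(2) by simp
    moreover have "snd z *\<^sub>R (A - B) = 0" using that \<open>fst z = 0\<close> by (simp add: L_def)
    then have "snd z = 0" using assms(3) by simp
    ultimately show ?thesis by (simp add: prod_eq_iff)
  qed
  then have "inj L" using linear_injective_0 \<open>linear L\<close> by blast
  then have "inj (\<lambda>z. Ov + L z)" by (simp add: inj_def)
  moreover obtain k where "homeomorphism UNIV UNIV (\<lambda>z. Ov + L z) k"
    using affine_homeomorphism[OF \<open>linear L\<close> \<open>inj L\<close>] by blast
  ultimately show thesis
    using convex_hull_affine_image[OF \<open>linear L\<close>] closed_segment_affine_image[OF \<open>linear L\<close>]
      open_segment_affine_image[OF \<open>linear L\<close> \<open>inj L\<close>] assms(1)
    by (intro that[of "\<lambda>z. Ov + L z" k]) (simp_all add: L_def algebra_simps)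
qed

theorem mainTheorem4:
  fixes A B Ov C :: "real \<times> real"
  assumes "snd A = snd B" and "snd B > snd Ov"
    and "C \<in> open_segment A B"
  shows "\<exists>f g. homeomorphism (convex hull {A, B, Ov} - {A, B})
                   (convex hull {A, B, Ov} - ({A} \<union> closed_segment B C)) f g
             \<and> (\<forall>p \<in> convex hull {A, B, Ov} - {A, B}. snd (f p) = snd p)
             \<and> (\<forall>p \<in> closed_segment A Ov - {A}. f p = p)
             \<and> (\<forall>p \<in> closed_segment Ov B - {B}. f p = p)
             \<and> f ` open_segment A B = open_segment A C"
proof -
  obtain s where "A \<noteq> B" and s: "0 < s" "s < 1" and C: "C = s *\<^sub>R A + (1 - s) *\<^sub>R B"
  proof -
    obtain u where "A \<noteq> B" "0 < u" "u < 1" "C = (1 - u) *\<^sub>R A + u *\<^sub>R B"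
      using assms(3) in_segment(2) by blast
    then show thesis by (intro that[of "1 - u"]) auto
  qed
  obtain h k where hk: "homeomorphism UNIV UNIV h k" and "inj h"
    and vertices: "h (1,1) = A" "h (1,0) = B" "h (0,0) = Ov"
    and top: "\<And>s. h (1,s) = s *\<^sub>R A + (1 - s) *\<^sub>R B"
    and snd_h: "\<And>z. snd (h z) = snd Ov + fst z * (snd B - snd Ov)"
    and images: "\<And>S. h ` (convex hull S) = convex hull (h ` S)"
      "\<And>a b. h ` closed_segment a b = closed_segment (h a) (h b)"
      "\<And>a b. h ` open_segment a b = open_segment (h a) (h b)"
    using plane_triangle_chart[OF assms(1) assms(2)[THEN less_imp_neq, THEN not_sym] \<open>A \<noteq> B\<close>]
    by blast
  have "h (1,s) = C" by (simp add: top C)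
  have kh: "k (h z) = z" for z using hk by (simp add: homeomorphism_apply1)
  have model_sets: "closed_segment A Ov - {A} = h ` (closed_segment (1,1) (0,0) - {(1,1)})"
      "closed_segment Ov B = h ` closed_segment (0,0) (1,0)"
      "open_segment A B = h ` open_segment (1,1) (1,0)"
      "open_segment A C = h ` open_segment (1,1) (1,s)"
    by (simp_all add: image_set_diff[OF \<open>inj h\<close>] images vertices \<open>h (1,s) = C\<close>)
  show ?thesis
  proof (intro exI conjI ballI)
    show "homeomorphism (convex hull {A, B, Ov} - {A, B})
        (convex hull {A, B, Ov} - ({A} \<union> closed_segment B C))
        (h \<circ> triangle_shift s \<circ> k) (h \<circ> triangle_shift_inv s \<circ> k)"
      using homeomorphism_conjugate[OF homeomorphism_triangle_shift[OF s] hk] s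
      by (simp add: cut_triangle_eq image_set_diff[OF \<open>inj h\<close>] images vertices \<open>h (1,s) = C\<close> insert_commute)
    show "snd ((h \<circ> triangle_shift s \<circ> k) p) = snd p" for p
      using arg_cong[OF homeomorphism_apply2[OF hk, of p], of snd]
      by (simp add: snd_h triangle_shift_def)
    show "(h \<circ> triangle_shift s \<circ> k) p = p" if "p \<in> closed_segment A Ov - {A}" for p
      using that unfolding model_sets(1) by (elim imageE) (simp add: kh triangle_shift_diagonal[OF s])
    show "(h \<circ> triangle_shift s \<circ> k) p = p" if "p \<in> closed_segment Ov B - {B}" for p
      using that unfolding model_sets(2) by (elim DiffE imageE) (simp add: kh triangle_shift_base[OF s])
    show "(h \<circ> triangle_shift s \<circ> k) ` open_segment A B = open_segment A C"
      unfolding model_sets(3,4) by (simp add: image_image kh flip: triangle_shift_top_edge[OF s])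
  qed
qed

end
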